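(* Let $k\in\mathbb{N}$, let $\alpha_0,\dots,\alpha_k>0$, $\boldsymbol{\alpha}=[\alpha_0,\dots,\alpha_k]^\top$, and let $\boldsymbol{X}=[X_0,\dots,X_k]^\top$ have the Dirichlet distribution with density $\frac1{\mathcal{B}(\boldsymbol{\alpha})}\prod_{i=0}^kx_i^{\alpha_i-1}$ on $\{x_i>0,\ \sum_{i=0}^kx_i=1\}$, where $\mathcal{B}(\boldsymbol{\alpha})=\prod_{i=0}^k\Gamma(\alpha_i)/\Gamma(\sum_{i=0}^k\alpha_i)$. Let $\mu_i=\alpha_i/\sum_{\ell=0}^k\alpha_\ell$, $\boldsymbol{\mu}=[\mu_0,\dots,\mu_k]^\top$. Let $\boldsymbol{\mathcal{X}}_1,\dots,\boldsymbol{\mathcal{X}}_n$ be independent random vectors with the same distribution as $\boldsymbol{X}$ and $\overline{\boldsymbol{\mathcal{X}}}_n=\frac1n\sum_{\ell=1}^n\boldsymbol{\mathcal{X}}_\ell$. Let $z_0,\dots,z_k$ be positive reals with $\sum_{\ell=0}^kz_\ell=1$, $\boldsymbol{z}=[z_0,\dots,z_k]^\top$, and $\widehat{\boldsymbol{\alpha}}=[\widehat\alpha_0,\dots,\widehat\alpha_k]^\top$ with $\widehat\alpha_i=\alpha_0z_i/z_0$. If $\boldsymbol{z}\boldsymbol{\prec}\boldsymbol{\mu}$, then $$\Pr\{\overline{\boldsymbol{\mathcal{X}}}_n\boldsymbol{\prec}\boldsymbol{z}\}\le\Big[\frac{\mathcal{B}(\widehat{\boldsymbol{\alpha}})}{\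mathcal{B}(\boldsymbol{\alpha})}\prod_{i=1}^k\frac{z_i^{\alpha_i}}{z_i^{\widehat\alpha_i}}\Big]^n.$$
   Context: For vectors $\boldsymbol{x}=[x_0,\dots,x_k]^\top,\boldsymbol{y}=[y_0,\dots,y_k]^\top$, $\boldsymbol{x}\boldsymbol{\prec}\boldsymbol{y}$ means $x_i\le y_i$ for $i=1,\dots,k$ (index $0$ is not compared). *)

theory Defs
  imports "HOL-Probability.Probability"
begin

definition mbeta :: "nat \<Rightarrow> (nat \<Rightarrow> real) \<Rightarrow> real" where
  "mbeta k a = (\<Prod>i=0..k. Gamma (a i)) / Gamma (\<Sum>i=0..k. a i)"

definition dirichlet_pdf :: "nat \<Rightarrow> (nat \<Rightarrow> real) \<Rightarrow> (nat \<Rightarrow> real) \<Rightarrow> real" where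
  "dirichlet_pdf k a x = (1 / mbeta k a) * (\<Prod>i=0..k. x i powr (a i - 1))"

definition simplex_embed :: "nat \<Rightarrow> (nat \<Rightarrow> real) \<Rightarrow> (nat \<Rightarrow> real)" where
  "simplex_embed k y = (\<lambda>i\<in>{0..k}. if i = 0 then 1 - (\<Sum>j=1..k. y j) else y i)"

text \<open>The Dirichlet distribution Dir(alpha) on vectors indexed by {0..k}: the density above
  with respect to Lebesgue measure on the free coordinates x_1..x_k, restricted to the
  open simplex {x_i > 0, sum x_i = 1}, pushed onto the (k+1)-dimensional space.\<close>
definition dirichlet :: "nat \<Rightarrow> (nat \<Rightarrow> real) \<Rightarrow> (nat \<Rightarrow> real) measure" where
  "dirichlet k a =
     distr
       (density (PiM {1..k} (\<lambda>_. lborel))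
          (\<lambda>y. ennreal (indicator {y. (\<forall>i\<in>{1..k}. y i > 0) \<and> (\<Sum>j=1..k. y j) < 1} y
                         * dirichlet_pdf k a (simplex_embed k y))))
       (PiM {0..k} (\<lambda>_. borel))
       (simplex_embed k)"

end

theory Submission
  imports Defs
begin

text \<open>
  A Chernoff bound with tilted Dirichlet parameters. For exponents \<open>c\<close> with \<open>c 0 = a 0\<close> and
  \<open>0 < c i \<le> a i\<close>, the function \<open>h x = \<Prod>i=1..k. (x i / z i) powr (c i - a i)\<close> satisfies
  \<open>\<Prod>l. h (X l) \<ge> 1\<close> whenever every coordinate mean is at most \<open>z i\<close> (AM-GM, the exponents
  being non-positive), so by independence the probability is at most \<open>(E h(X))^n\<close>. Multiplying
  the Dirichlet(a) density by \<open>h\<close> gives \<open>\<Prod>i. z i powr (a i - c i)\<close> times the unnormalised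
  Dirichlet(c) density, whose integral, computed one coordinate at a time from Beta integrals,
  yields \<open>E h(X) = B(c) / B(a) * \<Prod>i. z i powr a i / z i powr c i\<close>. The hypothesis that \<open>z\<close> is
  dominated by the mean vector is exactly what makes the choice \<open>c i = a 0 * z i / z 0\<close> admissible.
\<close>

lemma nn_integral_Beta_scaled:
  fixes a b s :: real
  assumes a: "a > 0" and b: "b > 0" and s: "s > 0"
  shows "(\<integral>\<^sup>+t. ennreal (indicator {0<..<s} t * (t powr (a - 1) * (s - t) powr (b - 1))) \<partial>lborel)
         = ennreal (s powr (a + b - 1) * Beta a b)"
proof -
  have "((\<lambda>t. t powr (a - 1) * (1 - t) powr (b - 1)) has_integral Beta a b) {0<..<1}"
    using has_integral_Beta_real[OF a b] by (simp add: has_integral_Icc_iff_Ioo)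
  then have Beta: "(\<integral>\<^sup>+t. ennreal (t powr (a - 1) * (1 - t) powr (b - 1)) * indicator {0<..<1} t \<partial>lborel)
      = ennreal (Beta a b)"
    by (rule nn_integral_has_integral_lebesgue'[rotated]) auto
  have scale: "ennreal (indicator {0<..<s} (s * t) * ((s * t) powr (a - 1) * (s - s * t) powr (b - 1)))
      = ennreal (s powr (a - 1) * s powr (b - 1))
        * (ennreal (t powr (a - 1) * (1 - t) powr (b - 1)) * indicator {0<..<1} t)" for t
  proof (cases "0 < t \<and> t < 1")
    case True
    have "s - s * t = s * (1 - t)" by (simp add: algebra_simps)
    then show ?thesis using True s
      by (simp add: indicator_def powr_mult ennreal_mult'[symmetric] mult_ac)
  next
    case False
    then have "\<not> (0 < s * t \<and> s * t < s)" using s by (simp add: zero_less_mult_iff)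
    with False show ?thesis by (auto simp: indicator_def)
  qed
  have "s * (s powr (a - 1) * s powr (b - 1)) = s powr (a + b - 1)"
    using s by (simp add: powr_add[symmetric] powr_mult_base)
  moreover have "Beta a b \<ge> 0" using a b by (simp add: Beta_def)
  ultimately show ?thesis
    using s by (simp add: nn_integral_real_affine[where c = s and t = 0] scale nn_integral_cmult Beta
        ennreal_mult'[symmetric] ennreal_mult[symmetric] mult.assoc)
qed

text \<open>The simplex is scaled by \<open>s\<close> so that the integral can be computed by induction on \<open>A\<close>:
  fixing one coordinate \<open>t\<close> leaves the kernel on the simplex of size \<open>s - t\<close>.\<close>

definition dirichlet_kernel :: "nat set \<Rightarrow> real \<Rightarrow> real \<Rightarrow> (nat \<Rightarrow> real) \<Rightarrow> (nat \<Rightarrow> real) \<Rightarrow> real" where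
  "dirichlet_kernel A s c0 c y = indicator {y. (\<forall>i\<in>A. y i > 0) \<and> (\<Sum>j\<in>A. y j) < s} y *
      ((s - (\<Sum>j\<in>A. y j)) powr (c0 - 1) * (\<Prod>i\<in>A. y i powr (c i - 1)))"

lemma borel_measurable_dirichlet_kernel [measurable]:
  "dirichlet_kernel A s c0 c \<in> borel_measurable (PiM A (\<lambda>_. lborel))"
  unfolding dirichlet_kernel_def by measurable

lemma dirichlet_kernel_insert:
  assumes "finite A" "i \<notin> A"
  shows "dirichlet_kernel (insert i A) s c0 c (x(i := t))
       = indicator {0<..<s} t * t powr (c i - 1) * dirichlet_kernel A (s - t) c0 c x"
proof -
  have sum: "(\<Sum>j\<in>insert i A. (x(i := t)) j) = t + (\<Sum>j\<in>A. x j)"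
    using assms by (simp add: sum.insert) (intro sum.cong, auto)
  have "(\<Prod>j\<in>A. (x(i := t)) j powr (c j - 1)) = (\<Prod>j\<in>A. x j powr (c j - 1))"
    using assms by (intro prod.cong) auto
  then have prod: "(\<Prod>j\<in>insert i A. (x(i := t)) j powr (c j - 1)) = t powr (c i - 1) * (\<Prod>j\<in>A. x j powr (c j - 1))"
    using assms by simp
  have "(\<forall>j\<in>A. x j > 0) \<Longrightarrow> (\<Sum>j\<in>A. x j) \<ge> 0" by (simp add: sum_nonneg less_imp_le)
  then have "indicator {y. (\<forall>j\<in>insert i A. y j > 0) \<and> (\<Sum>j\<in>insert i A. y j) < s} (x(i := t))
      = (indicator {0<..<s} t * indicator {y. (\<forall>j\<in>A. y j > 0) \<and> (\<Sum>j\<in>A. y j) < s - t} x :: real)"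
    using sum assms by (auto simp: indicator_def)
  then show ?thesis unfolding dirichlet_kernel_def sum prod by (simp add: algebra_simps)
qed

lemma nn_integral_dirichlet_kernel:
  assumes "finite A" "\<forall>i\<in>A. c i > 0" "c0 > 0" "s > 0"
  shows "(\<integral>\<^sup>+y. ennreal (dirichlet_kernel A s c0 c y) \<partial>PiM A (\<lambda>_. lborel))
     = ennreal (s powr (c0 + (\<Sum>i\<in>A. c i) - 1)
         * ((\<Prod>i\<in>A. Gamma (c i)) * Gamma c0 / Gamma (c0 + (\<Sum>i\<in>A. c i))))"
  using assms
proof (induction A arbitrary: s rule: finite_induct)
  case empty
  then have "Gamma c0 \<noteq> 0" by (metis Gamma_real_pos less_irrefl)
  then show ?case using empty by (simp add: PiM_empty dirichlet_kernel_def)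
next
  case (insert i A s)
  interpret product_sigma_finite "\<lambda>_. lborel" by standard
  define C where "C = c0 + (\<Sum>i\<in>A. c i)"
  define G where "G = (\<Prod>i\<in>A. Gamma (c i)) * Gamma c0 / Gamma C"
  have ci: "c i > 0" using insert by simp
  have C: "C > 0" unfolding C_def using insert by (intro add_pos_nonneg sum_nonneg) (auto simp: less_imp_le)
  have G: "G \<ge> 0" unfolding G_def using insert C
    by (intro divide_nonneg_pos mult_nonneg_nonneg prod_nonneg) (auto intro: less_imp_le Gamma_real_pos)
  have inner: "ennreal (indicator {0<..<s} t * t powr (c i - 1))
        * (\<integral>\<^sup>+x. ennreal (dirichlet_kernel A (s - t) c0 c x) \<partial>PiM A (\<lambda>_. lborel))
      = ennreal G * ennreal (indicator {0<..<s} t * (t powr (c i - 1) * (s - t) powr (C - 1)))" for t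
  proof (cases "t \<in> {0<..<s}")
    case True
    then show ?thesis using insert G
      by (simp add: insert.IH C_def G_def ennreal_mult'[symmetric] ennreal_mult[symmetric] mult_ac)
  qed simp
  have "(\<integral>\<^sup>+y. ennreal (dirichlet_kernel (insert i A) s c0 c y) \<partial>PiM (insert i A) (\<lambda>_. lborel))
      = (\<integral>\<^sup>+t. \<integral>\<^sup>+x. ennreal (indicator {0<..<s} t * t powr (c i - 1))
          * ennreal (dirichlet_kernel A (s - t) c0 c x) \<partial>PiM A (\<lambda>_. lborel) \<partial>lborel)"
    using insert.hyps
    by (simp add: product_nn_integral_insert_rev dirichlet_kernel_insert ennreal_mult')
  also have "\<dots> = (\<integral>\<^sup>+t. ennreal G
      * ennreal (indicator {0<..<s} t * (t powr (c i - 1) * (s - t) powr (C - 1))) \<partial>lborel)"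
    by (simp add: nn_integral_cmult inner)
  also have "\<dots> = ennreal G * ennreal (s powr (c i + C - 1) * Beta (c i) C)"
    using ci C insert.prems by (subst nn_integral_cmult) (auto simp: nn_integral_Beta_scaled)
  also have "\<dots> = ennreal (s powr (c0 + (\<Sum>i\<in>insert i A. c i) - 1)
        * ((\<Prod>i\<in>insert i A. Gamma (c i)) * Gamma c0 / Gamma (c0 + (\<Sum>i\<in>insert i A. c i))))"
  proof -
    have "Beta (c i) C \<ge> 0" using ci C by (simp add: Beta_def Gamma_real_pos less_imp_le)
    moreover have "G * (s powr (c i + C - 1) * Beta (c i) C)
      = s powr (c0 + (\<Sum>i\<in>insert i A. c i) - 1)
        * ((\<Prod>i\<in>insert i A. Gamma (c i)) * Gamma c0 / Gamma (c0 + (\<Sum>i\<in>insert i A. c i)))"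
      using insert.hyps Gamma_real_pos[OF C] unfolding G_def C_def Beta_def by (simp add: field_simps)
    ultimately show ?thesis using G by (simp add: ennreal_mult[symmetric])
  qed
  finally show ?case .
qed

lemma powr_times_ratio_powr:
  fixes y z a c :: real
  assumes "y > 0" "z > 0"
  shows "y powr (a - 1) * (y / z) powr (c - a) = z powr (a - c) * y powr (c - 1)"
  using assms by (simp add: powr_divide powr_minus_divide powr_diff powr_add[symmetric] field_simps)

lemma dirichlet_kernel_tilt:
  assumes "finite A" "\<forall>i\<in>A. z i > 0"
  shows "dirichlet_kernel A s c0 a y * (\<Prod>i\<in>A. (y i / z i) powr (c i - a i))
       = (\<Prod>i\<in>A. z i powr (a i - c i)) * dirichlet_kernel A s c0 c y"
proof (cases "\<forall>i\<in>A. y i > 0")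
  case True
  then have "(\<Prod>i\<in>A. y i powr (a i - 1)) * (\<Prod>i\<in>A. (y i / z i) powr (c i - a i))
      = (\<Prod>i\<in>A. z i powr (a i - c i)) * (\<Prod>i\<in>A. y i powr (c i - 1))"
    using assms by (simp add: prod.distrib[symmetric] powr_times_ratio_powr)
  then show ?thesis unfolding dirichlet_kernel_def by (simp add: mult_ac)
qed (simp add: dirichlet_kernel_def)

lemma measurable_simplex_embed [measurable]:
  "simplex_embed k \<in> measurable (PiM {1..k} (\<lambda>_. lborel)) (PiM {0..k} (\<lambda>_. borel))"
  unfolding simplex_embed_def
proof (rule measurable_restrict)
  fix i assume "i \<in> {0..k}"
  then show "(\<lambda>y. if i = 0 then 1 - (\<Sum>j = 1..k. y j) else y i) \<in> borel_measurable (PiM {1..k} (\<lambda>_. lborel))"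
    by (cases "i = 0") simp_all
qed

lemma mbeta_pos: "\<forall>i\<in>{0..k}. a i > 0 \<Longrightarrow> mbeta k a > 0"
  unfolding mbeta_def by (intro divide_pos_pos prod_pos Gamma_real_pos sum_pos) auto

lemma indicator_simplex_dirichlet_pdf:
  "indicator {y. (\<forall>i\<in>{1..k}. y i > 0) \<and> (\<Sum>j=1..k. y j) < 1} y * dirichlet_pdf k a (simplex_embed k y)
     = dirichlet_kernel {1..k} 1 (a 0) a y / mbeta k a"
proof -
  have "(\<Prod>i=0..k. simplex_embed k y i powr (a i - 1))
      = (1 - (\<Sum>j=1..k. y j)) powr (a 0 - 1) * (\<Prod>i=1..k. y i powr (a i - 1))"
    by (simp add: prod.atLeast_Suc_atMost[of 0 k] simplex_embed_def)
  then show ?thesis by (simp add: dirichlet_pdf_def dirichlet_kernel_def)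
qed

lemma dirichlet_eq_distr_density_kernel:
  "dirichlet k a = distr (density (PiM {1..k} (\<lambda>_. lborel))
      (\<lambda>y. ennreal (dirichlet_kernel {1..k} 1 (a 0) a y / mbeta k a))) (PiM {0..k} (\<lambda>_. borel)) (simplex_embed k)"
  unfolding dirichlet_def by (simp only: indicator_simplex_dirichlet_pdf)

lemma nn_integral_dirichlet:
  assumes h: "h \<in> borel_measurable (PiM {0..k} (\<lambda>_. borel))"
  shows "(\<integral>\<^sup>+x. h x \<partial>dirichlet k a)
       = (\<integral>\<^sup>+y. ennreal (dirichlet_kernel {1..k} 1 (a 0) a y / mbeta k a) * h (simplex_embed k y)
            \<partial>PiM {1..k} (\<lambda>_. lborel))"
proof -
  define D where "D = density (PiM {1..k} (\<lambda>_. lborel))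
      (\<lambda>y. ennreal (dirichlet_kernel {1..k} 1 (a 0) a y / mbeta k a))"
  have "simplex_embed k \<in> measurable D (PiM {0..k} (\<lambda>_. borel))"
    unfolding D_def measurable_density_eq1 by (rule measurable_simplex_embed)
  then have "(\<integral>\<^sup>+x. h x \<partial>distr D (PiM {0..k} (\<lambda>_. borel)) (simplex_embed k))
      = (\<integral>\<^sup>+y. h (simplex_embed k y) \<partial>D)"
    by (rule nn_integral_distr) (simp add: h)
  also have "\<dots> = (\<integral>\<^sup>+y. ennreal (dirichlet_kernel {1..k} 1 (a 0) a y / mbeta k a) * h (simplex_embed k y)
      \<partial>PiM {1..k} (\<lambda>_. lborel))"
    unfolding D_def using measurable_comp[OF measurable_simplex_embed h]
    by (intro nn_integral_density) (measurable, simp add: comp_def)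
  finally show ?thesis unfolding dirichlet_eq_distr_density_kernel D_def .
qed

lemma AE_dirichlet_pos: "AE x in dirichlet k a. \<forall>i\<in>{0..k}. x i > 0"
proof -
  define D where "D = density (PiM {1..k} (\<lambda>_. lborel))
      (\<lambda>y. ennreal (dirichlet_kernel {1..k} 1 (a 0) a y / mbeta k a))"
  have "simplex_embed k \<in> measurable D (PiM {0..k} (\<lambda>_. borel))"
    unfolding D_def measurable_density_eq1 by (rule measurable_simplex_embed)
  moreover have "{x \<in> space (PiM {0..k} (\<lambda>_. borel)). \<forall>i\<in>{0..k}. x i > (0::real)} \<in> sets (PiM {0..k} (\<lambda>_. borel))"
    by measurable
  moreover have "AE y in D. \<forall>i\<in>{0..k}. simplex_embed k y i > 0"
    unfolding D_def
    by (subst AE_density, measurable)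
       (auto intro!: AE_I2 simp: dirichlet_kernel_def indicator_def simplex_embed_def)
  ultimately show ?thesis
    unfolding dirichlet_eq_distr_density_kernel D_def[symmetric]
    by (rule AE_distr_iff[where P = "\<lambda>x. \<forall>i\<in>{0..k}. x i > 0", THEN iffD2])
qed

lemma nn_integral_dirichlet_tilt:
  assumes apos: "\<forall>i\<in>{0..k}. a i > 0" and cpos: "\<forall>i\<in>{1..k}. c i > 0" and c0: "c 0 = a 0"
    and zpos: "\<forall>i\<in>{1..k}. z i > 0"
  shows "(\<integral>\<^sup>+x. ennreal (\<Prod>i\<in>{1..k}. (x i / z i) powr (c i - a i)) \<partial>dirichlet k a)
       = ennreal (mbeta k c / mbeta k a * (\<Prod>i=1..k. z i powr a i / z i powr c i))"
proof -
  define K where "K = (\<Prod>i=1..k. z i powr (a i - c i)) / mbeta k a"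
  have K: "K \<ge> 0" unfolding K_def using mbeta_pos[OF apos] by (intro divide_nonneg_pos prod_nonneg) auto
  have "(\<integral>\<^sup>+x. ennreal (\<Prod>i\<in>{1..k}. (x i / z i) powr (c i - a i)) \<partial>dirichlet k a)
      = (\<integral>\<^sup>+y. ennreal K * ennreal (dirichlet_kernel {1..k} 1 (a 0) c y) \<partial>PiM {1..k} (\<lambda>_. lborel))"
  proof (subst nn_integral_dirichlet, measurable, intro nn_integral_cong)
    fix y :: "nat \<Rightarrow> real"
    have "(\<Prod>i=1..k. (simplex_embed k y i / z i) powr (c i - a i)) = (\<Prod>i=1..k. (y i / z i) powr (c i - a i))"
      by (intro prod.cong) (auto simp: simplex_embed_def)
    moreover have "dirichlet_kernel {1..k} 1 (a 0) a y / mbeta k a \<ge> 0"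
      using mbeta_pos[OF apos] by (simp add: dirichlet_kernel_def prod_nonneg)
    ultimately show "ennreal (dirichlet_kernel {1..k} 1 (a 0) a y / mbeta k a)
          * ennreal (\<Prod>i=1..k. (simplex_embed k y i / z i) powr (c i - a i))
        = ennreal K * ennreal (dirichlet_kernel {1..k} 1 (a 0) c y)"
      using K zpos dirichlet_kernel_tilt[of "{1..k}" z 1 "a 0" a y c]
      by (simp add: ennreal_mult'[symmetric] K_def)
  qed
  also have "\<dots> = ennreal K * ennreal ((\<Prod>i=1..k. Gamma (c i)) * Gamma (a 0) / Gamma (a 0 + (\<Sum>i=1..k. c i)))"
    using apos cpos by (simp add: nn_integral_cmult nn_integral_dirichlet_kernel)
  also have "\<dots> = ennreal (mbeta k c / mbeta k a * (\<Prod>i=1..k. z i powr a i / z i powr c i))"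
  proof -
    have "mbeta k c = (\<Prod>i=1..k. Gamma (c i)) * Gamma (a 0) / Gamma (a 0 + (\<Sum>i=1..k. c i))"
      unfolding mbeta_def
      by (simp add: prod.atLeast_Suc_atMost[of 0 k] sum.atLeast_Suc_atMost[of 0 k] c0 mult_ac)
    moreover have "(\<Prod>i=1..k. z i powr a i / z i powr c i) = (\<Prod>i=1..k. z i powr (a i - c i))"
      by (intro prod.cong) (simp_all add: powr_diff)
    ultimately show ?thesis using K by (simp add: ennreal_mult'[symmetric] K_def mult_ac)
  qed
  finally show ?thesis .
qed

lemma prod_powr_ge_1_if_mean_le:
  fixes x :: "'a \<Rightarrow> real" and z b :: real
  assumes "finite I" "I \<noteq> {}" and x: "\<forall>l\<in>I. x l > 0" and z: "z > 0"
    and mean: "(\<Sum>l\<in>I. x l) / card I \<le> z" and b: "b \<le> 0"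
  shows "1 \<le> (\<Prod>l\<in>I. (x l / z) powr b)"
proof -
  define P where "P = (\<Prod>l\<in>I. x l)"
  define n where "n = card I"
  have n: "n > 0" using assms by (simp add: n_def card_gt_0_iff)
  have P: "P > 0" using x by (simp add: P_def prod_pos)
  have "P powr (1 / n) \<le> (\<Sum>l\<in>I. x l / n)"
    unfolding P_def n_def using assms by (intro arith_geom_mean) auto
  also have "\<dots> \<le> z" using mean by (simp add: n_def sum_divide_distrib)
  finally have "(P powr (1 / n)) ^ n \<le> z ^ n" by (intro power_mono) auto
  then have "P \<le> z ^ n" using n P by (simp add: powr_realpow[symmetric] powr_powr)
  then have "(\<Prod>l\<in>I. x l / z) \<le> 1" using z by (simp add: prod_dividef P_def n_def)
  moreover have "(\<Prod>l\<in>I. x l / z) > 0" using x z by (simp add: prod_pos)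
  ultimately have "1 powr b \<le> (\<Prod>l\<in>I. x l / z) powr b" using b by (intro powr_mono2')
  then show ?thesis by (simp add: prod_powr_distrib)
qed

lemma prod_prod_powr_ge_1_if_means_le:
  fixes x :: "'a \<Rightarrow> 'b \<Rightarrow> real" and z b :: "'b \<Rightarrow> real"
  assumes "finite I" "I \<noteq> {}" "finite J" "\<forall>l\<in>I. \<forall>i\<in>J. x l i > 0" "\<forall>i\<in>J. z i > 0"
    and "\<forall>i\<in>J. (\<Sum>l\<in>I. x l i) / card I \<le> z i" "\<forall>i\<in>J. b i \<le> 0"
  shows "1 \<le> (\<Prod>l\<in>I. \<Prod>i\<in>J. (x l i / z i) powr b i)"
proof -
  have "1 \<le> (\<Prod>i\<in>J. \<Prod>l\<in>I. (x l i / z i) powr b i)"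
    by (rule prod_ge_1, rule prod_powr_ge_1_if_mean_le) (use assms in auto)
  then show ?thesis by (subst prod.swap)
qed

lemma tilted_parameter_le:
  fixes a z :: "nat \<Rightarrow> real"
  assumes apos: "\<forall>i\<in>{0..k}. a i > 0" and zpos: "\<forall>i\<in>{0..k}. z i > 0"
    and zsum: "(\<Sum>i=0..k. z i) = 1" and zmu: "\<forall>i\<in>{1..k}. z i \<le> a i / (\<Sum>l=0..k. a l)"
    and i: "i \<in> {1..k}"
  shows "a 0 * z i / z 0 \<le> a i"
proof -
  define S where "S = (\<Sum>l=0..k. a l)"
  have S: "S = a 0 + (\<Sum>l=1..k. a l)" and z: "(\<Sum>l=1..k. z l) = 1 - z 0"
    using zsum by (simp_all add: S_def sum.atLeast_Suc_atMost[of 0 k])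
  have "S > 0" unfolding S_def using apos by (intro sum_pos) auto
  have "(\<Sum>l=1..k. z l) \<le> (\<Sum>l=1..k. a l / S)" using zmu by (intro sum_mono) (simp add: S_def)
  also have "\<dots> = (S - a 0) / S" using S by (simp add: sum_divide_distrib)
  finally have "1 - z 0 \<le> (S - a 0) / S" by (simp only: z)
  then have "a 0 \<le> S * z 0" using \<open>S > 0\<close> by (simp add: field_simps)
  then have "a 0 * z i / z 0 \<le> S * z i" using zpos i by (simp add: divide_le_eq mult.commute mult_right_mono)
  also have "\<dots> \<le> a i" using zmu i \<open>S > 0\<close> by (simp add: S_def le_divide_eq mult.commute)
  finally show ?thesis .
qed

lemma (in prob_space) emeasure_le_nn_integral_power_if_iid:
  fixes X :: "'i \<Rightarrow> 'a \<Rightarrow> 'b" and h :: "'b \<Rightarrow> ennreal"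
  assumes indep: "indep_vars (\<lambda>_. N) X I" and "finite I"
    and distr: "\<And>l. l \<in> I \<Longrightarrow> distr M N (X l) = D"
    and h: "h \<in> borel_measurable N" and E: "E \<in> sets M"
    and good: "AE x in D. Q x"
    and dominates: "\<And>\<omega>. \<omega> \<in> E \<Longrightarrow> \<forall>l\<in>I. Q (X l \<omega>) \<Longrightarrow> 1 \<le> (\<Prod>l\<in>I. h (X l \<omega>))"
  shows "emeasure M E \<le> (\<integral>\<^sup>+x. h x \<partial>D) ^ card I"
proof -
  have X: "X l \<in> measurable M N" if "l \<in> I" for l
    using indep that by (simp add: indep_vars_def)
  have "AE \<omega> in M. Q (X l \<omega>)" if "l \<in> I" for l
    using good AE_distrD[OF X[OF that], of Q] unfolding distr[OF that] by blast
  then have "AE \<omega> in M. \<forall>l\<in>I. Q (X l \<omega>)"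
    using \<open>finite I\<close> by (simp add: eventually_ball_finite)
  then have "AE \<omega> in M. indicator E \<omega> \<le> (\<Prod>l\<in>I. h (X l \<omega>))"
    by eventually_elim (simp add: indicator_def dominates)
  then have "(\<integral>\<^sup>+\<omega>. indicator E \<omega> \<partial>M) \<le> (\<integral>\<^sup>+\<omega>. (\<Prod>l\<in>I. h (X l \<omega>)) \<partial>M)"
    by (rule nn_integral_mono_AE)
  then have "emeasure M E \<le> (\<integral>\<^sup>+\<omega>. (\<Prod>l\<in>I. h (X l \<omega>)) \<partial>M)"
    using E by simp
  also have "\<dots> = (\<Prod>l\<in>I. \<integral>\<^sup>+\<omega>. h (X l \<omega>) \<partial>M)"
  proof (rule indep_vars_nn_integral[OF \<open>finite I\<close>])
    show "indep_vars (\<lambda>_. borel) (\<lambda>l \<omega>. h (X l \<omega>)) I"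
      using h by (rule indep_vars_compose2[OF indep])
  qed simp
  also have "\<dots> = (\<Prod>l\<in>I. \<integral>\<^sup>+x. h x \<partial>D)"
  proof (rule prod.cong)
    fix l assume "l \<in> I"
    then show "(\<integral>\<^sup>+\<omega>. h (X l \<omega>) \<partial>M) = (\<integral>\<^sup>+x. h x \<partial>D)"
      using X h by (simp add: distr[symmetric] nn_integral_distr)
  qed simp
  finally show ?thesis by simp
qed

lemma sets_Collect_sample_means_le:
  fixes X :: "'i \<Rightarrow> 'a \<Rightarrow> 'j \<Rightarrow> real"
  assumes X: "\<And>l. l \<in> I \<Longrightarrow> X l \<in> measurable M (PiM K (\<lambda>_. borel))" and "finite J" "J \<subseteq> K"
  shows "{\<omega> \<in> space M. \<forall>i\<in>J. (\<Sum>l\<in>I. X l \<omega> i) / r \<le> z i} \<in> sets M"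
proof (rule sets.sets_Collect_finite_All[OF _ \<open>finite J\<close>])
  fix i assume "i \<in> J"
  then have "(\<lambda>\<omega>. X l \<omega> i) \<in> borel_measurable M" if "l \<in> I" for l
    using measurable_compose[OF X[OF that] measurable_component_singleton] \<open>J \<subseteq> K\<close> by auto
  then have [measurable]: "(\<lambda>\<omega>. (\<Sum>l\<in>I. X l \<omega> i) / r) \<in> borel_measurable M"
    by (intro borel_measurable_divide borel_measurable_sum) auto
  show "{\<omega> \<in> space M. (\<Sum>l\<in>I. X l \<omega> i) / r \<le> z i} \<in> sets M" by measurable
qed

lemma (in prob_space) measure_sample_means_le_dirichlet:
  fixes X :: "nat \<Rightarrow> 'a \<Rightarrow> (nat \<Rightarrow> real)" and a c z :: "nat \<Rightarrow> real"
  assumes "n \<ge> 1" and apos: "\<forall>i\<in>{0..k}. a i > 0"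
    and indep: "indep_vars (\<lambda>_. PiM {0..k} (\<lambda>_. borel)) X {1..n}"
    and distr: "\<forall>l\<in>{1..n}. distr M (PiM {0..k} (\<lambda>_. borel)) (X l) = dirichlet k a"
    and cpos: "\<forall>i\<in>{1..k}. c i > 0" and c0: "c 0 = a 0" and cle: "\<forall>i\<in>{1..k}. c i \<le> a i"
    and zpos: "\<forall>i\<in>{1..k}. z i > 0"
  shows "measure M {\<omega> \<in> space M. \<forall>i\<in>{1..k}. (\<Sum>l=1..n. X l \<omega> i) / real n \<le> z i}
         \<le> (mbeta k c / mbeta k a * (\<Prod>i=1..k. z i powr a i / z i powr c i)) ^ n"
proof -
  define E where "E = {\<omega> \<in> space M. \<forall>i\<in>{1..k}. (\<Sum>l=1..n. X l \<omega> i) / real n \<le> z i}"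
  define R where "R = mbeta k c / mbeta k a * (\<Prod>i=1..k. z i powr a i / z i powr c i)"
  have "\<forall>i\<in>{0..k}. c i > 0"
  proof
    fix i assume "i \<in> {0..k}"
    then show "c i > 0" using cpos c0 apos[rule_format, of 0] by (cases "i = 0") auto
  qed
  then have R: "R \<ge> 0" unfolding R_def using mbeta_pos[OF apos] mbeta_pos[of k c] by (simp add: prod_nonneg)
  have "E \<in> sets M"
    unfolding E_def using indep by (intro sets_Collect_sample_means_le) (auto simp: indep_vars_def)
  have "emeasure M E \<le> (\<integral>\<^sup>+x. ennreal (\<Prod>i\<in>{1..k}. (x i / z i) powr (c i - a i)) \<partial>dirichlet k a) ^ card {1..n}"
  proof (rule emeasure_le_nn_integral_power_if_iid[OF indep _ _ _ \<open>E \<in> sets M\<close> AE_dirichlet_pos])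
    fix \<omega> assume "\<omega> \<in> E" and pos: "\<forall>l\<in>{1..n}. \<forall>i\<in>{0..k}. X l \<omega> i > 0"
    have "1 \<le> (\<Prod>l\<in>{1..n}. \<Prod>i\<in>{1..k}. (X l \<omega> i / z i) powr (c i - a i))"
    proof (rule prod_prod_powr_ge_1_if_means_le)
      show "\<forall>i\<in>{1..k}. (\<Sum>l\<in>{1..n}. X l \<omega> i) / real (card {1..n}) \<le> z i"
        using \<open>\<omega> \<in> E\<close> by (simp add: E_def)
      show "\<forall>l\<in>{1..n}. \<forall>i\<in>{1..k}. X l \<omega> i > 0" using pos by simp
    qed (use \<open>n \<ge> 1\<close> zpos cle in simp_all)
    then show "1 \<le> (\<Prod>l\<in>{1..n}. ennreal (\<Prod>i\<in>{1..k}. (X l \<omega> i / z i) powr (c i - a i)))"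
      by (simp add: prod_ennreal prod_nonneg)
  next
    show "distr M (PiM {0..k} (\<lambda>_. borel)) (X l) = dirichlet k a" if "l \<in> {1..n}" for l
      using distr that by blast
  next
    show "(\<lambda>x. ennreal (\<Prod>i\<in>{1..k}. (x i / z i) powr (c i - a i))) \<in> borel_measurable (PiM {0..k} (\<lambda>_. borel))"
      by measurable
  qed simp
  also have "\<dots> = ennreal (R ^ n)"
    using R unfolding nn_integral_dirichlet_tilt[OF apos cpos c0 zpos] R_def[symmetric]
    by (simp add: ennreal_power)
  finally show ?thesis
    using R by (simp add: E_def R_def emeasure_eq_measure ennreal_le_iff)
qed

theorem theorem12:
  fixes M :: "'s measure" and k n :: nat and a z :: "nat \<Rightarrow> real"
    and Xs :: "nat \<Rightarrow> 's \<Rightarrow> (nat \<Rightarrow> real)"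
  assumes "prob_space M"
    and "n \<ge> 1"
    and apos: "\<forall>i\<in>{0..k}. a i > 0"
    and rv: "\<forall>l\<in>{1..n}. Xs l \<in> measurable M (PiM {0..k} (\<lambda>_. borel))"
    and indep: "prob_space.indep_vars M (\<lambda>_. PiM {0..k} (\<lambda>_. borel)) Xs {1..n}"
    and dist: "\<forall>l\<in>{1..n}. distr M (PiM {0..k} (\<lambda>_. borel)) (Xs l) = dirichlet k a"
    and zpos: "\<forall>i\<in>{0..k}. z i > 0"
    and zsum: "(\<Sum>i=0..k. z i) = 1"
    and zmu: "\<forall>i\<in>{1..k}. z i \<le> a i / (\<Sum>l=0..k. a l)"
  shows "measure M {\<omega> \<in> space M. \<forall>i\<in>{1..k}. (\<Sum>l=1..n. Xs l \<omega> i) / real n \<le> z i}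
         \<le> ((mbeta k (\<lambda>i. a 0 * z i / z 0) / mbeta k a)
             * (\<Prod>i=1..k. z i powr a i / z i powr (a 0 * z i / z 0))) ^ n"
proof -
  interpret prob_space M by fact
  define c where "c = (\<lambda>i. a 0 * z i / z 0)"
  have a0: "a 0 > 0" and z0: "z 0 > 0" using apos[rule_format, of 0] zpos[rule_format, of 0] by simp_all
  have "\<forall>i\<in>{1..k}. c i > 0" using a0 z0 zpos by (simp add: c_def)
  moreover have "c 0 = a 0" using z0 by (simp add: c_def)
  moreover have "\<forall>i\<in>{1..k}. c i \<le> a i"
    unfolding c_def using tilted_parameter_le[OF apos zpos zsum zmu] by blast
  moreover have "\<forall>i\<in>{1..k}. z i > 0" using zpos by simp
  ultimately show ?thesis
    unfolding c_def by (rule measure_sample_means_le_dirichlet[OF \<open>n \<ge> 1\<close> apos indep dist])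
qed

end
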